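(* Let $\mathcal H$ be a complex Hilbert space, $T\in\boldsymbol B(\mathcal H)$ a quasinormal operator that is not normal, and $n$ an integer greater than $1$. If there exists a quasinormal $Q\in\boldsymbol B(\mathcal H)$ with $Q^n=T$, then there exists $R\in\boldsymbol B(\mathcal H)$ which is not quasinormal and satisfies $R^n=T$.
   Context: A bounded operator $T$ is normal if $T^*T=TT^*$ and quasinormal if $T(T^*T)=(T^*T)T$. *)

theory Defs
  imports "HOL-Analysis.Analysis"
begin

class complex_vector = real_vector +
  fixes scaleC :: "complex \<Rightarrow> 'a \<Rightarrow> 'a" (infixr \<open>*\<^sub>C\<close> 75)
  assumes scaleC_add_right: "a *\<^sub>C (x + y) = a *\<^sub>C x + a *\<^sub>C y"
    and scaleC_add_left: "(a + b) *\<^sub>C x = a *\<^sub>C x + b *\<^sub>C x"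
    and scaleC_scaleC: "a *\<^sub>C (b *\<^sub>C x) = (a * b) *\<^sub>C x"
    and scaleC_one: "1 *\<^sub>C x = x"
    and scaleR_scaleC: "scaleR r x = complex_of_real r *\<^sub>C x"

class complex_inner = complex_vector + real_normed_vector +
  fixes cinner :: "'a \<Rightarrow> 'a \<Rightarrow> complex"
  assumes cinner_conj: "cinner x y = cnj (cinner y x)"
    and cinner_add_right: "cinner x (y + z) = cinner x y + cinner x z"
    and cinner_scaleC_right: "cinner x (a *\<^sub>C y) = a * cinner x y"
    and cinner_nonneg: "Re (cinner x x) \<ge> 0"
    and cinner_eq_zero_iff: "cinner x x = 0 \<longleftrightarrow> x = 0"
    and norm_eq_sqrt_cinner: "norm x = sqrt (Re (cinner x x))"

class chilbert_space = complex_inner + complete_space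

definition bounded_clinear_op :: "('a::complex_inner \<Rightarrow> 'a) \<Rightarrow> bool" where
  "bounded_clinear_op T \<longleftrightarrow> bounded_linear T \<and> (\<forall>a x. T (a *\<^sub>C x) = a *\<^sub>C T x)"

text \<open>Hilbert space adjoint T* (unique when it exists; exists for bounded T on a Hilbert space).\<close>
definition cadjoint :: "('a::complex_inner \<Rightarrow> 'a) \<Rightarrow> ('a \<Rightarrow> 'a)" where
  "cadjoint T = (SOME S. \<forall>x y. cinner (T x) y = cinner x (S y))"

definition normal_op :: "('a::complex_inner \<Rightarrow> 'a) \<Rightarrow> bool" where
  "normal_op T \<longleftrightarrow> cadjoint T \<circ> T = T \<circ> cadjoint T"

definition quasinormal_op :: "('a::complex_inner \<Rightarrow> 'a) \<Rightarrow> bool" where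
  "quasinormal_op T \<longleftrightarrow> T \<circ> (cadjoint T \<circ> T) = (cadjoint T \<circ> T) \<circ> T"

end

theory Submission
  imports Defs
begin

text \<open>
  Let \<open>Q\<close> be a quasinormal \<open>n\<close>-th root of \<open>T\<close> and let \<open>N\<close> be the orthogonal complement
  of all \<open>Q\<^sup>m e\<close> with \<open>Q\<^sup>* e = 0\<close> and \<open>n \<nmid> m\<close>. Since \<open>Q\<close> commutes with \<open>Q\<^sup>*Q\<close>, which
  preserves \<open>ker Q\<^sup>*\<close>, the inner product \<open>\<langle>Q\<^sup>m e, Q\<^sup>k x\<rangle>\<close> equals
  \<open>\<langle>Q\<^sup>m\<^sup>-\<^sup>k (Q\<^sup>*Q)\<^sup>k e, x\<rangle>\<close> for \<open>k \<le> m\<close> and vanishes otherwise; hence \<open>N\<close> reduces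
  \<open>T = Q\<^sup>n\<close>. The operator \<open>W\<close> that doubles \<open>N\<close> and fixes \<open>N\<^sup>\<bottom>\<close> therefore commutes
  with \<open>T\<close>, so \<open>R = W Q W\<^sup>-\<^sup>1\<close> is again an \<open>n\<close>-th root of \<open>T\<close>.
  As \<open>T\<close> is not normal, neither is \<open>Q\<close>, so there is \<open>d \<in> ker Q\<^sup>*\<close> with \<open>Q d \<noteq> 0\<close>.
  Then \<open>d\<close> and \<open>Q\<^sup>*Q d\<close> lie in \<open>N\<close> while \<open>Q d\<close> and \<open>Q Q\<^sup>*Q d\<close> are orthogonal to it, and a
  direct computation gives \<open>R R\<^sup>*R d = QQ\<^sup>*Q d / 8\<close> but \<open>R\<^sup>*R R d = 2 QQ\<^sup>*Q d\<close> (for \<open>n = 2\<close>)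
  or \<open>QQ\<^sup>*Q d / 2\<close> (for \<open>n > 2\<close>), with \<open>QQ\<^sup>*Q d \<noteq> 0\<close>; so \<open>R\<close> is not quasinormal.
\<close>

lemma cinner_zero_right [simp]: "cinner x (0::'a::complex_inner) = 0"
  using cinner_add_right[of x 0 0] by simp

lemma cinner_zero_left [simp]: "cinner (0::'a::complex_inner) x = 0"
  by (subst cinner_conj) simp

lemma cinner_add_left: "cinner (x + y) (z::'a::complex_inner) = cinner x z + cinner y z"
  by (subst (1 2 3) cinner_conj) (simp add: cinner_add_right)

lemma cinner_scaleC_left: "cinner (a *\<^sub>C x) (y::'a::complex_inner) = cnj a * cinner x y"
  by (subst (1 2) cinner_conj) (simp add: cinner_scaleC_right)

lemma cinner_minus_right: "cinner x (- y) = - cinner x (y::'a::complex_inner)"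
  using cinner_add_right[of x y "- y"] by (simp add: eq_neg_iff_add_eq_0 add.commute)

lemma cinner_minus_left: "cinner (- x) y = - cinner x (y::'a::complex_inner)"
  by (subst (1 2) cinner_conj) (simp add: cinner_minus_right)

lemma cinner_diff_right: "cinner x (y - z) = cinner x y - cinner x (z::'a::complex_inner)"
  by (simp only: diff_conv_add_uminus cinner_add_right cinner_minus_right)

lemma cinner_diff_left: "cinner (x - y) z = cinner x z - cinner y (z::'a::complex_inner)"
  by (simp only: diff_conv_add_uminus cinner_add_left cinner_minus_left)

lemma cinner_scaleR_right: "cinner x (r *\<^sub>R y) = of_real r * cinner x (y::'a::complex_inner)"
  by (simp add: scaleR_scaleC cinner_scaleC_right)

lemma cinner_scaleR_left: "cinner (r *\<^sub>R x) y = of_real r * cinner x (y::'a::complex_inner)"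
  by (simp add: scaleR_scaleC cinner_scaleC_left)

lemma cinner_self_eq_norm_sq: "cinner x x = of_real ((norm (x::'a::complex_inner))\<^sup>2)"
proof -
  have "Im (cinner x x) = 0"
    using arg_cong[OF cinner_conj[of x x], of Im] by simp
  moreover have "Re (cinner x x) = (norm x)\<^sup>2"
    using norm_eq_sqrt_cinner[of x] cinner_nonneg[of x] by simp
  ultimately show ?thesis by (simp add: complex_eq_iff)
qed

lemma scaleC_zero_right [simp]: "a *\<^sub>C (0::'a::complex_vector) = 0"
  using scaleC_add_right[of a 0 0] by simp

lemma scaleC_minus_right: "a *\<^sub>C (- x) = - (a *\<^sub>C (x::'a::complex_vector))"
  using scaleC_add_right[of a x "- x"] by (simp add: eq_neg_iff_add_eq_0 add.commute)

lemma scaleC_diff_right: "a *\<^sub>C (x - y) = a *\<^sub>C x - a *\<^sub>C (y::'a::complex_vector)"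
  by (simp only: diff_conv_add_uminus scaleC_add_right scaleC_minus_right)

lemma scaleC_scaleR_commute: "a *\<^sub>C (r *\<^sub>R x) = r *\<^sub>R (a *\<^sub>C (x::'a::complex_vector))"
  by (simp add: scaleR_scaleC scaleC_scaleC mult.commute)

lemma norm_add_sq_orthogonal:
  assumes "cinner x y = 0"
  shows "(norm (x + y))\<^sup>2 = (norm x)\<^sup>2 + (norm (y::'a::complex_inner))\<^sup>2"
proof -
  have "cinner y x = 0" using assms cinner_conj[of y x] by simp
  then have "cinner (x + y) (x + y) = cinner x x + cinner y y"
    using assms by (simp add: cinner_add_left cinner_add_right)
  then have "of_real ((norm (x + y))\<^sup>2) = (of_real ((norm x)\<^sup>2 + (norm y)\<^sup>2) :: complex)"
    by (simp add: cinner_self_eq_norm_sq)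
  then show ?thesis by (simp only: of_real_eq_iff)
qed

lemma norm_scaleC: "norm (a *\<^sub>C x) = cmod a * norm (x::'a::complex_inner)"
proof -
  have "cinner (a *\<^sub>C x) (a *\<^sub>C x) = (cnj a * a) * cinner x x"
    by (simp add: cinner_scaleC_left cinner_scaleC_right)
  also have "cnj a * a = of_real ((cmod a)\<^sup>2)"
    by (metis complex_norm_square mult.commute)
  finally have "of_real ((norm (a *\<^sub>C x))\<^sup>2) = (of_real ((cmod a * norm x)\<^sup>2) :: complex)"
    by (simp add: cinner_self_eq_norm_sq power_mult_distrib)
  then have "(norm (a *\<^sub>C x))\<^sup>2 = (cmod a * norm x)\<^sup>2"
    by (simp only: of_real_eq_iff)
  then show ?thesis by simp
qed

lemma cmod_cinner_le: "cmod (cinner x y) \<le> norm x * norm (y::'a::complex_inner)"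
proof (cases "x = 0")
  case False
  define a where "a = cinner x y / cinner x x"
  have "cinner x x \<noteq> 0" using False cinner_eq_zero_iff by blast
  then have "cinner x (y - a *\<^sub>C x) = 0"
    by (simp add: a_def cinner_diff_right cinner_scaleC_right)
  then have "cinner (y - a *\<^sub>C x) (a *\<^sub>C x) = 0"
    by (metis cinner_conj cinner_scaleC_right complex_cnj_zero mult_zero_right)
  then have "(norm y)\<^sup>2 = (norm (y - a *\<^sub>C x))\<^sup>2 + (norm (a *\<^sub>C x))\<^sup>2"
    using norm_add_sq_orthogonal[of "y - a *\<^sub>C x" "a *\<^sub>C x"] by simp
  then have "(cmod a * norm x)\<^sup>2 \<le> (norm y)\<^sup>2"
    by (simp add: norm_scaleC)
  then have "cmod a * norm x \<le> norm y"
    by (rule power2_le_imp_le) simp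
  moreover have "cmod a = cmod (cinner x y) / (norm x)\<^sup>2"
    unfolding a_def norm_divide cinner_self_eq_norm_sq norm_of_real by simp
  ultimately show ?thesis
    using False by (simp add: power2_eq_square field_simps)
qed simp

lemma cinner_eqI: "(\<And>x. cinner x a = cinner x b) \<Longrightarrow> a = (b::'a::complex_inner)"
  by (metis cinner_diff_right cinner_eq_zero_iff right_minus_eq)

lemma parallelogram_law:
  "(norm (a + b))\<^sup>2 + (norm (a - b))\<^sup>2 = 2 * (norm a)\<^sup>2 + 2 * (norm (b::'a::complex_inner))\<^sup>2"
proof -
  have "cinner (a + b) (a + b) + cinner (a - b) (a - b) = 2 * cinner a a + 2 * cinner b b"
    by (simp add: cinner_add_left cinner_add_right cinner_diff_left cinner_diff_right algebra_simps)
  then have "of_real ((norm (a + b))\<^sup>2 + (norm (a - b))\<^sup>2)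
      = (of_real (2 * (norm a)\<^sup>2 + 2 * (norm b)\<^sup>2) :: complex)"
    by (simp add: cinner_self_eq_norm_sq)
  then show ?thesis by (simp only: of_real_eq_iff)
qed

lemma bounded_linear_cinner_right: "bounded_linear (\<lambda>x. cinner v (x::'a::complex_inner))"
proof (rule bounded_linear_intro[where K = "norm v"])
  show "cinner v (r *\<^sub>R x) = r *\<^sub>R cinner v x" for r x
    by (simp add: cinner_scaleR_right scaleR_conv_of_real)
  show "norm (cinner v x) \<le> norm x * norm v" for x
    using cmod_cinner_le[of v x] by (simp add: mult.commute)
qed (rule cinner_add_right)

section \<open>Orthogonal projections onto closed subspaces\<close>

definition csubspace :: "'a::complex_vector set \<Rightarrow> bool" where
  "csubspace M \<longleftrightarrow> 0 \<in> M \<and> (\<forall>x\<in>M. \<forall>y\<in>M. x + y \<in> M) \<and> (\<forall>c. \<forall>x\<in>M. c *\<^sub>C x \<in> M)"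

lemma csubspace_0: "csubspace M \<Longrightarrow> 0 \<in> M"
  unfolding csubspace_def by blast

lemma csubspace_add: "csubspace M \<Longrightarrow> x \<in> M \<Longrightarrow> y \<in> M \<Longrightarrow> x + y \<in> M"
  unfolding csubspace_def by blast

lemma csubspace_scaleC: "csubspace M \<Longrightarrow> x \<in> M \<Longrightarrow> c *\<^sub>C x \<in> M"
  unfolding csubspace_def by blast

lemma csubspace_scaleR: "csubspace M \<Longrightarrow> x \<in> M \<Longrightarrow> r *\<^sub>R x \<in> M"
  unfolding scaleR_scaleC by (rule csubspace_scaleC)

lemma csubspace_diff: "csubspace M \<Longrightarrow> x \<in> M \<Longrightarrow> y \<in> M \<Longrightarrow> x - y \<in> M"
  using csubspace_add[of M x "(-1) *\<^sub>R y"] csubspace_scaleR[of M y "-1"] by simp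

lemma minimizing_sequence_Cauchy:
  fixes m :: "nat \<Rightarrow> 'a::complex_inner"
  assumes midpoint: "\<And>j k. d \<le> (norm (x - (1/2) *\<^sub>R (m j + m k)))\<^sup>2"
    and near: "\<And>k. (norm (x - m k))\<^sup>2 < d + 1 / real (Suc k)"
  shows "Cauchy m"
proof (rule metric_CauchyI)
  fix e :: real
  assume "e > 0"
  then obtain N where N: "inverse (real (Suc N)) < e\<^sup>2 / 4"
    using reals_Archimedean[of "e\<^sup>2 / 4"] by auto
  have "dist (m j) (m k) < e" if "N \<le> j" "N \<le> k" for j k
  proof -
    have "x - m j + (x - m k) = 2 *\<^sub>R (x - (1/2) *\<^sub>R (m j + m k))"
      by (simp add: algebra_simps scaleR_2)
    then have "(norm (m j - m k))\<^sup>2 =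
        2 * (norm (x - m j))\<^sup>2 + 2 * (norm (x - m k))\<^sup>2 - 4 * (norm (x - (1/2) *\<^sub>R (m j + m k)))\<^sup>2"
      using parallelogram_law[of "x - m j" "x - m k"]
      by (simp add: power_mult_distrib norm_minus_commute)
    also have "\<dots> < 2 / real (Suc j) + 2 / real (Suc k)"
      using midpoint[of j k] near[of j] near[of k] by simp
    also have "\<dots> \<le> 4 * inverse (real (Suc N))"
    proof -
      have "1 / real (Suc j) \<le> 1 / real (Suc N)" "1 / real (Suc k) \<le> 1 / real (Suc N)"
        using that by (simp_all add: frac_le)
      then show ?thesis by (simp add: inverse_eq_divide)
    qed
    also have "\<dots> < e\<^sup>2" using N by simp
    finally show ?thesis
      using \<open>e > 0\<close> by (simp add: dist_norm power_less_imp_less_base)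
  qed
  then show "\<exists>N. \<forall>j\<ge>N. \<forall>k\<ge>N. dist (m j) (m k) < e" by blast
qed

lemma nearest_point_exists:
  fixes M :: "'a::chilbert_space set"
  assumes sub: "csubspace M" and cl: "closed M"
  shows "\<exists>y\<in>M. \<forall>z\<in>M. norm (x - y) \<le> norm (x - z)"
proof -
  define d where "d = (INF z\<in>M. (norm (x - z))\<^sup>2)"
  have bdd: "bdd_below ((\<lambda>z. (norm (x - z))\<^sup>2) ` M)" by (rule bdd_belowI2[of _ 0]) simp
  have d_le: "d \<le> (norm (x - z))\<^sup>2" if "z \<in> M" for z
    unfolding d_def using bdd that by (rule cINF_lower)
  have "\<exists>z\<in>M. (norm (x - z))\<^sup>2 < d + 1 / real (Suc k)" for k
    using cInf_lessD[of "(\<lambda>z. (norm (x - z))\<^sup>2) ` M" "d + 1 / real (Suc k)"] csubspace_0[OF sub]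
    unfolding d_def by auto
  then obtain m where m: "\<And>k. m k \<in> M" and near: "\<And>k. (norm (x - m k))\<^sup>2 < d + 1 / real (Suc k)"
    by metis
  have "Cauchy m"
    using near
    by (rule minimizing_sequence_Cauchy[OF d_le, OF csubspace_scaleR[OF sub csubspace_add[OF sub m m]]])
  then obtain y where lim: "m \<longlonglongrightarrow> y" using Cauchy_convergent_iff convergent_def by blast
  have "(norm (x - y))\<^sup>2 \<le> d"
  proof (rule LIMSEQ_le)
    show "(\<lambda>k. (norm (x - m k))\<^sup>2) \<longlonglongrightarrow> (norm (x - y))\<^sup>2" by (intro tendsto_intros lim)
    show "(\<lambda>k. d + 1 / real (Suc k)) \<longlonglongrightarrow> d"
      using LIMSEQ_inverse_real_of_nat_add[of d] by (simp add: inverse_eq_divide)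
  qed (use near less_imp_le in blast)
  then have "\<forall>z\<in>M. norm (x - y) \<le> norm (x - z)"
    using d_le by (meson order_trans power2_le_imp_le norm_ge_zero)
  with closed_sequentially[OF cl m lim] show ?thesis by blast
qed

lemma nearest_point_orthogonal:
  fixes M :: "'a::complex_inner set"
  assumes sub: "csubspace M" and "y \<in> M" and nearest: "\<forall>z\<in>M. norm (x - y) \<le> norm (x - z)"
    and "z \<in> M"
  shows "cinner z (x - y) = 0"
proof -
  define w where "w = x - y"
  define c where "c = cinner z w"
  define s where "s = 1 / ((norm z)\<^sup>2 + 1)"
  have s: "s > 0" "s * (norm z)\<^sup>2 < 1"
    unfolding s_def by (simp_all add: add_pos_nonneg field_simps)
  have "cinner w z = cnj c" unfolding c_def by (rule cinner_conj)
  then have "cinner (w - (of_real s * c) *\<^sub>C z) (w - (of_real s * c) *\<^sub>C z) =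
      cinner w w - of_real (2 * s) * (c * cnj c) + of_real (s\<^sup>2) * (c * cnj c) * cinner z z"
    by (simp add: cinner_diff_left cinner_diff_right cinner_scaleC_left cinner_scaleC_right c_def
        algebra_simps power2_eq_square)
  also have "\<dots> = of_real ((norm w)\<^sup>2 - 2 * s * (cmod c)\<^sup>2 + s\<^sup>2 * (cmod c)\<^sup>2 * (norm z)\<^sup>2)"
    by (simp add: cinner_self_eq_norm_sq flip: complex_norm_square)
  finally have "(norm (w - (of_real s * c) *\<^sub>C z))\<^sup>2 =
      (norm w)\<^sup>2 - 2 * s * (cmod c)\<^sup>2 + s\<^sup>2 * (cmod c)\<^sup>2 * (norm z)\<^sup>2"
    by (simp only: cinner_self_eq_norm_sq of_real_eq_iff)
  moreover have "(norm w)\<^sup>2 \<le> (norm (w - (of_real s * c) *\<^sub>C z))\<^sup>2"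
    using nearest csubspace_add[OF sub \<open>y \<in> M\<close> csubspace_scaleC[OF sub \<open>z \<in> M\<close>]]
    by (force simp: w_def algebra_simps)
  ultimately have "s * (cmod c)\<^sup>2 * (2 - s * (norm z)\<^sup>2) \<le> 0"
    by (simp add: algebra_simps power2_eq_square)
  with s have "(cmod c)\<^sup>2 \<le> 0"
    by (simp add: mult_le_0_iff zero_less_mult_iff)
  then show ?thesis by (simp add: c_def w_def)
qed

lemma orthogonal_decomposition_exists:
  fixes M :: "'a::chilbert_space set"
  assumes "csubspace M" and "closed M"
  shows "\<exists>y\<in>M. \<forall>z\<in>M. cinner z (x - y) = 0"
  using nearest_point_exists[OF assms] nearest_point_orthogonal[OF assms(1)] by blast

definition proj :: "'a::complex_inner set \<Rightarrow> 'a \<Rightarrow> 'a" where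
  "proj M x = (SOME y. y \<in> M \<and> (\<forall>z\<in>M. cinner z (x - y) = 0))"

context
  fixes M :: "'a::chilbert_space set"
  assumes sub: "csubspace M" and cl: "closed M"
begin

lemma proj_in: "proj M x \<in> M"
  and proj_orthogonal: "z \<in> M \<Longrightarrow> cinner z (x - proj M x) = 0"
  using someI_ex[OF orthogonal_decomposition_exists[OF sub cl, of x, unfolded Bex_def]]
  unfolding proj_def by blast+

lemma proj_unique:
  assumes "y \<in> M" and orth: "\<And>z. z \<in> M \<Longrightarrow> cinner z (x - y) = 0"
  shows "proj M x = y"
proof -
  have d: "proj M x - y \<in> M" by (rule csubspace_diff[OF sub proj_in \<open>y \<in> M\<close>])
  have "cinner (proj M x - y) ((x - y) - (x - proj M x)) =
      cinner (proj M x - y) (x - y) - cinner (proj M x - y) (x - proj M x)"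
    by (rule cinner_diff_right)
  also have "\<dots> = 0" by (simp only: orth[OF d] proj_orthogonal[OF d] diff_self)
  finally have "proj M x - y = 0" by (simp add: cinner_eq_zero_iff)
  then show ?thesis by simp
qed

lemma proj_id: "x \<in> M \<Longrightarrow> proj M x = x"
  by (rule proj_unique) simp_all

lemma proj_idem: "proj M (proj M x) = proj M x"
  by (rule proj_id[OF proj_in])

lemma proj_eq_0: "(\<And>z. z \<in> M \<Longrightarrow> cinner z x = 0) \<Longrightarrow> proj M x = 0"
  by (rule proj_unique) (simp_all add: csubspace_0[OF sub])

lemma proj_add: "proj M (x + y) = proj M x + proj M y"
proof (rule proj_unique)
  show "proj M x + proj M y \<in> M" by (rule csubspace_add[OF sub proj_in proj_in])
  show "cinner z (x + y - (proj M x + proj M y)) = 0" if "z \<in> M" for z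
  proof -
    have "cinner z (x + y - (proj M x + proj M y)) = cinner z ((x - proj M x) + (y - proj M y))"
      by (simp add: algebra_simps)
    also have "\<dots> = 0" by (simp only: cinner_add_right proj_orthogonal[OF that] add_0)
    finally show ?thesis .
  qed
qed

lemma proj_scaleC: "proj M (c *\<^sub>C x) = c *\<^sub>C proj M x"
proof (rule proj_unique)
  show "c *\<^sub>C proj M x \<in> M" by (rule csubspace_scaleC[OF sub proj_in])
  show "cinner z (c *\<^sub>C x - c *\<^sub>C proj M x) = 0" if "z \<in> M" for z
    using proj_orthogonal[OF that, of x] by (simp add: cinner_scaleC_right flip: scaleC_diff_right)
qed

lemma proj_scaleR: "proj M (r *\<^sub>R x) = r *\<^sub>R proj M x"
  unfolding scaleR_scaleC by (rule proj_scaleC)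

lemma norm_proj_le: "norm (proj M x) \<le> norm x"
proof -
  have "(norm (proj M x + (x - proj M x)))\<^sup>2 = (norm (proj M x))\<^sup>2 + (norm (x - proj M x))\<^sup>2"
    by (rule norm_add_sq_orthogonal[OF proj_orthogonal[OF proj_in]])
  then have "(norm (proj M x))\<^sup>2 \<le> (norm x)\<^sup>2" by simp
  then show ?thesis by (rule power2_le_imp_le) simp
qed

lemma bounded_linear_proj: "bounded_linear (proj M)"
  by (rule bounded_linear_intro[where K = 1]) (simp_all add: proj_add proj_scaleR norm_proj_le)

lemma proj_self_adjoint: "cinner (proj M x) y = cinner x (proj M y)"
proof -
  have "cinner (proj M x) y = cinner (proj M x) (proj M y)"
    using proj_orthogonal[OF proj_in, of x y] cinner_diff_right[of "proj M x" y "proj M y"] by simp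
  moreover have "cinner x (proj M y) = cinner (proj M x) (proj M y)"
    using proj_orthogonal[OF proj_in, of y x] cinner_conj[of "x - proj M x" "proj M y"]
      cinner_diff_left[of x "proj M x" "proj M y"]
    by simp
  ultimately show ?thesis by simp
qed

end

section \<open>Adjoints\<close>

lemma riesz_representation:
  fixes f :: "'a::chilbert_space \<Rightarrow> complex"
  assumes bl: "bounded_linear f" and clin: "\<And>c x. f (c *\<^sub>C x) = c * f x"
  shows "\<exists>z. \<forall>x. f x = cinner z x"
proof (cases "\<forall>x. f x = 0")
  case True
  then show ?thesis by (intro exI[of _ 0]) simp
next
  case False
  then obtain x0 where x0: "f x0 \<noteq> 0" by blast
  interpret f: bounded_linear f by (rule bl)
  define K where "K = {x. f x = 0}"
  have "csubspace K" unfolding K_def csubspace_def by (simp add: f.add clin)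
  moreover have "closed K" unfolding K_def
    by (intro closed_Collect_eq f.continuous_on continuous_on_id continuous_on_const)
  ultimately obtain y where "y \<in> K" and orth: "\<And>z. z \<in> K \<Longrightarrow> cinner z (x0 - y) = 0"
    using orthogonal_decomposition_exists by blast
  define w where "w = x0 - y"
  have fw: "f w = f x0" using \<open>y \<in> K\<close> by (simp add: w_def K_def f.diff)
  then have "w \<noteq> 0" using x0 f.zero by auto
  then have ww: "cinner w w \<noteq> 0" by (simp add: cinner_eq_zero_iff)
  have "f x = cinner (cnj (f w / cinner w w) *\<^sub>C w) x" for x
  proof -
    \<comment> \<open>\<open>x - (f x / f w) w\<close> lies in the kernel \<open>K\<close>, which is orthogonal to \<open>w\<close>.\<close>
    have "f (x - (f x / f w) *\<^sub>C w) = 0" using fw x0 by (simp add: f.diff clin)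
    then have "cinner (x - (f x / f w) *\<^sub>C w) w = 0"
      using orth unfolding K_def w_def by blast
    then have "cinner w (x - (f x / f w) *\<^sub>C w) = 0"
      by (subst cinner_conj) simp
    then have "cinner w x = (f x / f w) * cinner w w"
      by (simp add: cinner_diff_right cinner_scaleC_right)
    then show ?thesis using ww fw x0 by (simp add: cinner_scaleC_left field_simps)
  qed
  then show ?thesis by blast
qed

lemma cadjoint_exists:
  fixes T :: "'a::chilbert_space \<Rightarrow> 'a"
  assumes "bounded_clinear_op T"
  shows "\<exists>S. \<forall>x y. cinner (T x) y = cinner x (S y)"
proof -
  have "\<exists>z. \<forall>x. cinner (T x) y = cinner x z" for y
  proof -
    have "bounded_linear (\<lambda>x. cinner y (T x))"
      using assms bounded_linear_compose[OF bounded_linear_cinner_right]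
      unfolding bounded_clinear_op_def by blast
    moreover have "cinner y (T (c *\<^sub>C x)) = c * cinner y (T x)" for c x
      using assms by (simp add: bounded_clinear_op_def cinner_scaleC_right)
    ultimately obtain z where "\<And>x. cinner y (T x) = cinner z x"
      using riesz_representation by blast
    then have "cinner (T x) y = cinner x z" for x
      using cinner_conj[of "T x" y] cinner_conj[of x z] by simp
    then show ?thesis by blast
  qed
  then show ?thesis by metis
qed

lemma cadjoint_right:
  fixes T :: "'a::chilbert_space \<Rightarrow> 'a"
  assumes "bounded_clinear_op T"
  shows "cinner (T x) y = cinner x (cadjoint T y)"
  using someI_ex[OF cadjoint_exists[OF assms]] unfolding cadjoint_def by blast

lemma cadjoint_left:
  fixes T :: "'a::chilbert_space \<Rightarrow> 'a"
  assumes "bounded_clinear_op T"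
  shows "cinner y (T x) = cinner (cadjoint T y) x"
  using cadjoint_right[OF assms, of x y] cinner_conj[of y "T x"] cinner_conj[of "cadjoint T y" x]
  by simp

lemma cadjoint_eqI:
  assumes "\<And>x y. cinner (T x) y = cinner x (S y)"
  shows "cadjoint T = (S :: 'a::complex_inner \<Rightarrow> 'a)"
proof
  have "\<exists>S. \<forall>x y. cinner (T x) y = cinner x (S y)" using assms by blast
  then have "\<forall>x y. cinner (T x) y = cinner x (cadjoint T y)"
    unfolding cadjoint_def by (rule someI_ex)
  then show "cadjoint T y = S y" for y
    by (intro cinner_eqI) (simp add: assms)
qed

lemma bounded_clinear_op_comp:
  "bounded_clinear_op S \<Longrightarrow> bounded_clinear_op T \<Longrightarrow> bounded_clinear_op (S \<circ> T)"
  unfolding bounded_clinear_op_def comp_def by (auto intro: bounded_linear_compose)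

lemma bounded_clinear_op_funpow: "bounded_clinear_op T \<Longrightarrow> bounded_clinear_op (T ^^ k)"
proof (induction k)
  case 0
  then show ?case by (simp add: bounded_clinear_op_def id_def bounded_linear_ident)
next
  case (Suc k)
  have "bounded_clinear_op (T \<circ> T ^^ k)"
    by (rule bounded_clinear_op_comp[OF Suc.prems Suc.IH[OF Suc.prems]])
  then show ?case by (simp only: funpow.simps(2))
qed

lemma cadjoint_comp:
  fixes S T :: "'a::chilbert_space \<Rightarrow> 'a"
  assumes "bounded_clinear_op S" and "bounded_clinear_op T"
  shows "cadjoint (S \<circ> T) = cadjoint T \<circ> cadjoint S"
  by (rule cadjoint_eqI) (simp add: cadjoint_right[OF assms(1)] cadjoint_right[OF assms(2)])

lemma cadjoint_funpow:
  fixes T :: "'a::chilbert_space \<Rightarrow> 'a"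
  assumes "bounded_clinear_op T"
  shows "cadjoint (T ^^ k) = cadjoint T ^^ k"
proof (induction k)
  case 0
  show ?case by (rule cadjoint_eqI) simp
next
  case (Suc k)
  have "cadjoint (T ^^ Suc k) = cadjoint (T \<circ> T ^^ k)" by (simp only: funpow.simps(2))
  also have "\<dots> = cadjoint (T ^^ k) \<circ> cadjoint T"
    by (rule cadjoint_comp[OF assms bounded_clinear_op_funpow[OF assms]])
  finally show ?case by (simp only: Suc funpow_Suc_right)
qed

lemma cadjoint_scaleR:
  fixes T :: "'a::chilbert_space \<Rightarrow> 'a"
  assumes "bounded_clinear_op T"
  shows "cadjoint T (r *\<^sub>R v) = r *\<^sub>R cadjoint T v"
  by (rule cinner_eqI) (simp add: cadjoint_right[OF assms, symmetric] cinner_scaleR_right)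

lemma adjoint_apply_eq_0_iff:
  fixes T :: "'a::complex_inner \<Rightarrow> 'a"
  assumes adj: "\<And>x y. cinner (T x) y = cinner x (S y)"
  shows "S (T x) = 0 \<longleftrightarrow> T x = 0"
proof
  assume "S (T x) = 0"
  then have "cinner (T x) (T x) = 0" by (simp add: adj)
  then show "T x = 0" by (simp add: cinner_eq_zero_iff)
next
  assume "T x = 0"
  have "cinner (S 0) (S 0) = 0"
    using adj[of "S 0" 0] cinner_conj[of "S 0" "T (S 0)"] by (simp add: adj)
  with \<open>T x = 0\<close> show "S (T x) = 0" by (simp add: cinner_eq_zero_iff)
qed

lemma funpow_commute:
  assumes "\<And>x. f (g x) = g (f x)"
  shows "(f ^^ j) ((g ^^ k) x) = (g ^^ k) ((f ^^ j) x)"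
proof -
  have fg: "(f ^^ j) (g x) = g ((f ^^ j) x)" for x
    by (induction j) (simp_all add: assms)
  show ?thesis by (induction k) (simp_all add: fg)
qed

lemma normal_op_funpow:
  fixes T :: "'a::chilbert_space \<Rightarrow> 'a"
  assumes "bounded_clinear_op T" and "normal_op T"
  shows "normal_op (T ^^ k)"
proof -
  have "cadjoint T (T x) = T (cadjoint T x)" for x
    using fun_cong[OF assms(2)[unfolded normal_op_def], of x] by simp
  then show ?thesis
    unfolding normal_op_def cadjoint_funpow[OF assms(1)] fun_eq_iff comp_def
    by (blast intro: funpow_commute)
qed

lemma funpow_conjugate:
  assumes "\<And>x. V (U x) = x"
  shows "((U \<circ> T \<circ> V) ^^ Suc k) x = U ((T ^^ Suc k) (V x))"
  by (induction k arbitrary: x) (simp_all add: assms)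

lemma proj_commute:
  fixes M :: "'a::chilbert_space set"
  assumes sub: "csubspace M" and cl: "closed M" and T: "bounded_clinear_op T"
    and "\<And>x. x \<in> M \<Longrightarrow> T x \<in> M" and "\<And>x. x \<in> M \<Longrightarrow> cadjoint T x \<in> M"
  shows "proj M (T x) = T (proj M x)"
proof (rule proj_unique[OF sub cl])
  show "T (proj M x) \<in> M" by (simp add: assms proj_in[OF sub cl])
  have "linear T" using T by (simp add: bounded_clinear_op_def bounded_linear.linear)
  show "cinner z (T x - T (proj M x)) = 0" if "z \<in> M" for z
  proof -
    have "cinner z (T x - T (proj M x)) = cinner (cadjoint T z) (x - proj M x)"
      by (simp add: linear_diff[OF \<open>linear T\<close>, symmetric] cadjoint_left[OF T])
    also have "\<dots> = 0" by (rule proj_orthogonal[OF sub cl]) (simp add: assms that)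
    finally show ?thesis .
  qed
qed

section \<open>Stretching along a closed subspace\<close>

definition stretch :: "'a::complex_inner set \<Rightarrow> real \<Rightarrow> 'a \<Rightarrow> 'a" where
  "stretch M c x = x + (c - 1) *\<^sub>R proj M x"

lemma stretch_1 [simp]: "stretch M 1 x = x"
  by (simp add: stretch_def)

context
  fixes M :: "'a::chilbert_space set"
  assumes sub: "csubspace M" and cl: "closed M"
begin

lemma proj_stretch: "proj M (stretch M c x) = c *\<^sub>R proj M x"
  by (simp only: stretch_def proj_add[OF sub cl] proj_scaleR[OF sub cl] proj_idem[OF sub cl])
    (simp add: algebra_simps)

lemma stretch_stretch: "stretch M a (stretch M b x) = stretch M (a * b) x"
proof -
  have "stretch M a (stretch M b x) = x + ((b - 1) + (a - 1) * b) *\<^sub>R proj M x"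
    by (simp add: stretch_def[of M a] proj_stretch) (simp add: stretch_def algebra_simps)
  then show ?thesis by (simp add: stretch_def algebra_simps)
qed

lemma stretch_scaleR: "stretch M c (r *\<^sub>R x) = r *\<^sub>R stretch M c x"
  by (simp add: stretch_def proj_scaleR[OF sub cl] scaleR_add_right)

lemma stretch_in: "x \<in> M \<Longrightarrow> stretch M c x = c *\<^sub>R x"
  by (simp add: stretch_def proj_id[OF sub cl] algebra_simps)

lemma stretch_proj_eq_0: "proj M x = 0 \<Longrightarrow> stretch M c x = x"
  by (simp add: stretch_def)

lemma bounded_clinear_op_stretch: "bounded_clinear_op (stretch M c)"
  unfolding bounded_clinear_op_def stretch_def
  by (simp add: bounded_linear_add bounded_linear_scaleR_right
      bounded_linear_compose[OF bounded_linear_scaleR_right bounded_linear_proj[OF sub cl]]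
      proj_scaleC[OF sub cl] scaleC_add_right scaleC_scaleR_commute)

lemma cadjoint_stretch: "cadjoint (stretch M c) = stretch M c"
  by (rule cadjoint_eqI)
    (simp add: stretch_def cinner_add_left cinner_add_right cinner_scaleR_left cinner_scaleR_right
      proj_self_adjoint[OF sub cl])

lemma stretch_commute:
  assumes "linear T" and "\<And>x. proj M (T x) = T (proj M x)"
  shows "stretch M c (T x) = T (stretch M c x)"
  by (simp add: stretch_def assms linear_add linear_scale)

end

section \<open>Quasinormal operators\<close>

locale quasinormal_operator =
  fixes Q :: "'a::chilbert_space \<Rightarrow> 'a"
  assumes bounded: "bounded_clinear_op Q" and quasinormal: "quasinormal_op Q"
begin

lemma linear: "linear Q"
  using bounded by (simp add: bounded_clinear_op_def bounded_linear.linear)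

lemma modulus_sq_self_adjoint: "cinner (cadjoint Q (Q x)) y = cinner x (cadjoint Q (Q y))"
  by (simp only: cadjoint_left[OF bounded, symmetric] cadjoint_right[OF bounded])

lemma modulus_sq_commute: "Q (cadjoint Q (Q x)) = cadjoint Q (Q (Q x))"
  using fun_cong[OF quasinormal[unfolded quasinormal_op_def], of x] by simp

lemma modulus_sq_funpow_commute: "cadjoint Q (Q ((Q ^^ j) x)) = (Q ^^ j) (cadjoint Q (Q x))"
  using funpow_commute[of Q "cadjoint Q \<circ> Q" j 1 x] modulus_sq_commute by simp

lemma cadjoint_modulus_sq_funpow_eq_0:
  assumes "cadjoint Q e = 0"
  shows "cadjoint Q (((cadjoint Q \<circ> Q) ^^ k) e) = 0"
proof (induction k)
  case (Suc k)
  define u where "u = ((cadjoint Q \<circ> Q) ^^ k) e"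
  define v where "v = cadjoint Q (cadjoint Q (Q u))"
  have u: "cadjoint Q u = 0" unfolding u_def by (rule Suc.IH)
  have "cinner v v = cinner (cadjoint Q (Q u)) (Q v)"
    by (simp add: v_def cadjoint_left[OF bounded])
  also have "\<dots> = cinner u (Q (cadjoint Q (Q v)))"
    by (simp add: modulus_sq_self_adjoint modulus_sq_commute)
  also have "\<dots> = 0" by (simp only: cadjoint_left[OF bounded] u cinner_zero_left)
  finally show ?case by (simp add: v_def u_def cinner_eq_zero_iff comp_def)
qed (simp add: assms)

lemma cinner_funpow_ker_adjoint:
  assumes e: "cadjoint Q e = 0"
  shows "cinner ((Q ^^ m) e) ((Q ^^ k) x) =
    (if k \<le> m then cinner ((Q ^^ (m - k)) (((cadjoint Q \<circ> Q) ^^ k) e)) x else 0)"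
proof (induction k arbitrary: x)
  case (Suc k)
  have "cinner ((Q ^^ m) e) ((Q ^^ Suc k) x) = cinner ((Q ^^ m) e) ((Q ^^ k) (Q x))"
    by (simp add: funpow_swap1)
  also have "\<dots> = (if k \<le> m then cinner ((Q ^^ (m - k)) (((cadjoint Q \<circ> Q) ^^ k) e)) (Q x) else 0)"
    by (rule Suc)
  also have "\<dots> = (if Suc k \<le> m
      then cinner ((Q ^^ (m - Suc k)) (((cadjoint Q \<circ> Q) ^^ Suc k) e)) x else 0)"
  proof (cases "k < m")
    case True
    then have "m - k = Suc (m - Suc k)" by simp
    then show ?thesis
      using True by (simp add: cadjoint_left[OF bounded] modulus_sq_funpow_commute)
  next
    case False
    then show ?thesis
      using cadjoint_modulus_sq_funpow_eq_0[OF e, of k] by (auto simp: cadjoint_left[OF bounded])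
  qed
  finally show ?case .
qed simp

lemma normal_if_ker_adjoint_subset_ker:
  assumes ker: "\<And>d. cadjoint Q d = 0 \<Longrightarrow> Q d = 0"
  shows "normal_op Q"
proof -
  \<comment> \<open>\<open>B\<close> is self-adjoint with \<open>B Q = 0\<close>, so \<open>Q\<^sup>* B = 0\<close>; then \<open>Q B = 0\<close> by hypothesis,
    hence \<open>B\<^sup>2 = 0\<close>.\<close>
  define B where "B x = Q (cadjoint Q x) - cadjoint Q (Q x)" for x
  have B_self_adjoint: "cinner (B x) y = cinner x (B y)" for x y
    by (simp add: B_def cinner_diff_left cinner_diff_right cadjoint_left[OF bounded]
        cadjoint_right[OF bounded] modulus_sq_self_adjoint)
  have "B (Q x) = 0" for x
    by (simp add: B_def modulus_sq_commute)
  then have "cadjoint Q (B x) = 0" for x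
    using B_self_adjoint[of x "Q (cadjoint Q (B x))"] cadjoint_left[OF bounded, of "B x"]
    by (simp add: cinner_eq_zero_iff)
  then have "B (B x) = 0" for x
    using ker adjoint_apply_eq_0_iff[of Q "cadjoint Q", OF cadjoint_right[OF bounded], of 0]
    by (simp add: B_def linear_0[OF linear])
  then have "B x = 0" for x
    using B_self_adjoint[of x "B x"] by (simp add: cinner_eq_zero_iff)
  then show ?thesis
    by (simp add: normal_op_def fun_eq_iff B_def)
qed

lemma ker_adjoint_not_subset_ker:
  assumes "\<not> normal_op (Q ^^ k)"
  obtains d where "cadjoint Q d = 0" and "Q d \<noteq> 0"
  using assms normal_op_funpow[OF bounded] normal_if_ker_adjoint_subset_ker by blast

end

section \<open>A root that is not quasinormal\<close>

locale quasinormal_root = quasinormal_operator Q for Q :: "'a::chilbert_space \<Rightarrow> 'a" +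
  fixes n :: nat
  assumes n_gt_1: "1 < n"
begin

definition reducing_subspace :: "'a set" where
  "reducing_subspace =
    {x. \<forall>e m. cadjoint Q e = 0 \<longrightarrow> \<not> n dvd m \<longrightarrow> cinner ((Q ^^ m) e) x = 0}"

definition root :: "'a \<Rightarrow> 'a" where
  "root = stretch reducing_subspace 2 \<circ> Q \<circ> stretch reducing_subspace (1/2)"

lemma csubspace_reducing_subspace: "csubspace reducing_subspace"
  by (simp add: csubspace_def reducing_subspace_def cinner_add_right cinner_scaleC_right)

lemma closed_reducing_subspace: "closed reducing_subspace"
proof -
  have "reducing_subspace =
      (\<Inter>e\<in>{e. cadjoint Q e = 0}. \<Inter>m\<in>{m. \<not> n dvd m}. {x. cinner ((Q ^^ m) e) x = 0})"
    by (auto simp: reducing_subspace_def)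
  then show ?thesis
    by (simp add: closed_INT closed_Collect_eq bounded_linear_cinner_right linear_continuous_on
        continuous_on_const)
qed

lemma funpow_n_reducing_subspace:
  assumes x: "x \<in> reducing_subspace"
  shows "(Q ^^ n) x \<in> reducing_subspace"
  unfolding reducing_subspace_def
proof (intro CollectI allI impI)
  fix e m
  assume e: "cadjoint Q e = 0" and m: "\<not> n dvd m"
  show "cinner ((Q ^^ m) e) ((Q ^^ n) x) = 0"
  proof (cases "n \<le> m")
    case True
    then have "\<not> n dvd m - n" using m by (simp add: dvd_minus_self)
    then show ?thesis
      using x True cadjoint_modulus_sq_funpow_eq_0[OF e, of n]
      by (simp add: cinner_funpow_ker_adjoint[OF e] reducing_subspace_def)
  qed (simp add: cinner_funpow_ker_adjoint[OF e])
qed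

lemma cadjoint_funpow_n_reducing_subspace:
  assumes x: "x \<in> reducing_subspace"
  shows "cadjoint (Q ^^ n) x \<in> reducing_subspace"
  unfolding reducing_subspace_def
proof (intro CollectI allI impI)
  fix e m
  assume e: "cadjoint Q e = 0" and m: "\<not> n dvd m"
  have "cinner ((Q ^^ m) e) (cadjoint (Q ^^ n) x) = cinner ((Q ^^ (n + m)) e) x"
    by (simp add: cadjoint_right[OF bounded_clinear_op_funpow[OF bounded], symmetric] funpow_add)
  also have "\<dots> = 0" using x e m by (simp add: reducing_subspace_def)
  finally show "cinner ((Q ^^ m) e) (cadjoint (Q ^^ n) x) = 0" .
qed

lemma stretch_funpow_n_commute:
  "stretch reducing_subspace c ((Q ^^ n) x) = (Q ^^ n) (stretch reducing_subspace c x)"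
proof (rule stretch_commute[OF csubspace_reducing_subspace closed_reducing_subspace])
  show "linear (Q ^^ n)"
    using bounded_clinear_op_funpow[OF bounded]
    by (simp add: bounded_clinear_op_def bounded_linear.linear)
  show "proj reducing_subspace ((Q ^^ n) y) = (Q ^^ n) (proj reducing_subspace y)" for y
    by (intro proj_commute csubspace_reducing_subspace closed_reducing_subspace
        bounded_clinear_op_funpow[OF bounded] funpow_n_reducing_subspace
        cadjoint_funpow_n_reducing_subspace)
qed

lemma root_funpow: "root ^^ n = Q ^^ n"
proof
  fix x
  obtain k where n: "Suc k = n" using n_gt_1 by (cases n) auto
  have "(root ^^ Suc k) x =
      stretch reducing_subspace 2 ((Q ^^ Suc k) (stretch reducing_subspace (1/2) x))"
    unfolding root_def
    by (rule funpow_conjugate)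
      (simp add: stretch_stretch[OF csubspace_reducing_subspace closed_reducing_subspace])
  then have "(root ^^ n) x =
      stretch reducing_subspace 2 ((Q ^^ n) (stretch reducing_subspace (1/2) x))"
    unfolding n .
  also have "\<dots> = (Q ^^ n) x"
    by (simp add: stretch_funpow_n_commute
        stretch_stretch[OF csubspace_reducing_subspace closed_reducing_subspace])
  finally show "(root ^^ n) x = (Q ^^ n) x" .
qed

lemma bounded_clinear_op_root: "bounded_clinear_op root"
  unfolding root_def
  by (intro bounded_clinear_op_comp bounded
      bounded_clinear_op_stretch[OF csubspace_reducing_subspace closed_reducing_subspace])

lemma cadjoint_root:
  "cadjoint root = stretch reducing_subspace (1/2) \<circ> cadjoint Q \<circ> stretch reducing_subspace 2"
  unfolding root_def
  by (simp add: cadjoint_comp bounded bounded_clinear_op_comp comp_assoc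
      bounded_clinear_op_stretch[OF csubspace_reducing_subspace closed_reducing_subspace]
      cadjoint_stretch[OF csubspace_reducing_subspace closed_reducing_subspace])

lemma ker_adjoint_subset_reducing_subspace:
  assumes "cadjoint Q e = 0"
  shows "e \<in> reducing_subspace"
  unfolding reducing_subspace_def
proof (intro CollectI allI impI)
  fix e' m
  assume "\<not> n dvd m"
  then obtain j where "m = Suc j" by (cases m) auto
  then show "cinner ((Q ^^ m) e') e = 0" by (simp add: cadjoint_right[OF bounded] assms)
qed

lemma proj_funpow_ker_adjoint:
  assumes e: "cadjoint Q e = 0" and "\<not> n dvd j"
  shows "proj reducing_subspace ((Q ^^ j) e) = 0"
proof (rule proj_eq_0[OF csubspace_reducing_subspace closed_reducing_subspace])
  fix z
  assume "z \<in> reducing_subspace"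
  then have "cinner ((Q ^^ j) e) z = 0" using assms by (simp add: reducing_subspace_def)
  then show "cinner z ((Q ^^ j) e) = 0" by (subst cinner_conj) simp
qed

lemmas stretch_in_reducing_subspace =
  stretch_in[OF csubspace_reducing_subspace closed_reducing_subspace]
lemmas stretch_orthogonal_reducing_subspace =
  stretch_proj_eq_0[OF csubspace_reducing_subspace closed_reducing_subspace]
lemmas stretch_scaleR_reducing_subspace =
  stretch_scaleR[OF csubspace_reducing_subspace closed_reducing_subspace]

lemma proj_apply_ker_adjoint:
  "cadjoint Q e = 0 \<Longrightarrow> proj reducing_subspace (Q e) = 0"
  using proj_funpow_ker_adjoint[of e 1] n_gt_1 by simp

lemma root_ker_adjoint:
  assumes "cadjoint Q d = 0"
  shows "root d = (1/2) *\<^sub>R Q d"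
  using assms
  by (simp add: root_def stretch_in_reducing_subspace ker_adjoint_subset_reducing_subspace
      linear_scale[OF linear] stretch_scaleR_reducing_subspace stretch_orthogonal_reducing_subspace
      proj_apply_ker_adjoint)

lemma root_cadjoint_root_ker_adjoint:
  assumes d: "cadjoint Q d = 0"
  shows "root (cadjoint root (root d)) = (1/8) *\<^sub>R Q (cadjoint Q (Q d))"
proof -
  have a: "cadjoint Q (cadjoint Q (Q d)) = 0"
    using cadjoint_modulus_sq_funpow_eq_0[OF d, of 1] by simp
  have "cadjoint root (root d) = (1/4) *\<^sub>R cadjoint Q (Q d)"
    using d a
    by (simp add: root_ker_adjoint cadjoint_root stretch_in_reducing_subspace
        ker_adjoint_subset_reducing_subspace cadjoint_scaleR[OF bounded]
        stretch_scaleR_reducing_subspace stretch_orthogonal_reducing_subspace proj_apply_ker_adjoint)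
  then show ?thesis
    using a
    by (simp add: root_def stretch_in_reducing_subspace ker_adjoint_subset_reducing_subspace
        linear_scale[OF linear] stretch_scaleR_reducing_subspace stretch_orthogonal_reducing_subspace
        proj_apply_ker_adjoint)
qed

lemma cadjoint_root_root_ker_adjoint:
  assumes d: "cadjoint Q d = 0"
  shows "cadjoint root (root (root d)) = (if n = 2 then 2 else 1/2) *\<^sub>R Q (cadjoint Q (Q d))"
proof -
  have a: "cadjoint Q (cadjoint Q (Q d)) = 0"
    using cadjoint_modulus_sq_funpow_eq_0[OF d, of 1] by simp
  have adjoint_QQd: "cadjoint Q (Q (Q d)) = Q (cadjoint Q (Q d))"
    by (simp add: modulus_sq_commute)
  have "root (root d) = root ((1/2) *\<^sub>R Q d)" by (simp add: root_ker_adjoint d)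
  also have "\<dots> = stretch reducing_subspace 2 ((1/2) *\<^sub>R Q (Q d))"
    unfolding root_def comp_apply
    using d by (simp add: stretch_scaleR_reducing_subspace linear_scale[OF linear]
        stretch_orthogonal_reducing_subspace proj_apply_ker_adjoint)
  finally have root_root: "root (root d) = stretch reducing_subspace 2 ((1/2) *\<^sub>R Q (Q d))" .
  show ?thesis
  proof (cases "n = 2")
    case True
    then have "Q (Q d) \<in> reducing_subspace"
      using funpow_n_reducing_subspace[OF ker_adjoint_subset_reducing_subspace[OF d]]
      by (simp add: numeral_2_eq_2)
    with a have "cadjoint root (root (root d)) = 2 *\<^sub>R Q (cadjoint Q (Q d))"
      by (simp add: root_root cadjoint_root stretch_in_reducing_subspace
          stretch_scaleR_reducing_subspace cadjoint_scaleR[OF bounded] adjoint_QQd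
          stretch_orthogonal_reducing_subspace proj_apply_ker_adjoint)
    then show ?thesis by (simp only: if_P[OF True])
  next
    case False
    then have "\<not> n dvd 2" using n_gt_1 by (auto dest: dvd_imp_le)
    then have "proj reducing_subspace (Q (Q d)) = 0"
      using proj_funpow_ker_adjoint[OF d, of 2] by (simp add: numeral_2_eq_2)
    with a have "cadjoint root (root (root d)) = (1/2) *\<^sub>R Q (cadjoint Q (Q d))"
      by (simp add: root_root cadjoint_root stretch_scaleR_reducing_subspace
          cadjoint_scaleR[OF bounded] adjoint_QQd stretch_orthogonal_reducing_subspace
          proj_apply_ker_adjoint)
    then show ?thesis by (simp only: if_not_P[OF False])
  qed
qed

lemma not_quasinormal_root:
  assumes "\<not> normal_op (Q ^^ n)"
  shows "\<not> quasinormal_op root"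
proof
  assume "quasinormal_op root"
  obtain d where d: "cadjoint Q d = 0" and "Q d \<noteq> 0"
    using ker_adjoint_not_subset_ker[OF assms] by blast
  then have "Q (cadjoint Q (Q d)) \<noteq> 0"
    using adjoint_apply_eq_0_iff[of Q "cadjoint Q", OF cadjoint_right[OF bounded]]
      adjoint_apply_eq_0_iff[of "cadjoint Q" Q, OF cadjoint_left[OF bounded, symmetric]]
    by simp
  moreover have "root (cadjoint root (root d)) = cadjoint root (root (root d))"
    using fun_cong[OF \<open>quasinormal_op root\<close>[unfolded quasinormal_op_def], of d] by simp
  ultimately show False
    by (simp add: root_cadjoint_root_ker_adjoint[OF d] cadjoint_root_root_ker_adjoint[OF d]
        scaleR_cancel_right split: if_splits)
qed

end

theorem theorem6p3:
  fixes T :: "'a::chilbert_space \<Rightarrow> 'a" and n :: nat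
  assumes "bounded_clinear_op T"
    and "quasinormal_op T"
    and "\<not> normal_op T"
    and "n > 1"
    and "\<exists>Q. bounded_clinear_op Q \<and> quasinormal_op Q \<and> Q ^^ n = T"
  shows "\<exists>R. bounded_clinear_op R \<and> \<not> quasinormal_op R \<and> R ^^ n = T"
proof -
  obtain Q where "bounded_clinear_op Q" "quasinormal_op Q" and T: "Q ^^ n = T"
    using assms(5) by blast
  then interpret quasinormal_root Q n
    using assms(4) by unfold_locales
  show ?thesis
    using bounded_clinear_op_root not_quasinormal_root root_funpow assms(3) T by blast
qed

end
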